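(* Let $n$ be a positive integer, $g=3n+1$, and let $G=\{\ell_1<\dots<\ell_g\}$ be a symmetric pure $(2n)$-sparse gapset of genus $g$ with multiplicity $m$. Then $G$ has depth $4$, its canonical partition is $G=G_0\cup G_1\cup G_2\cup G_3$ with $G_3=\{\ell_g\}$ and $G_2=\{\ell_{g-1}\}$, and moreover $\ell_{g-1}=2m+1$, $\ell_g=3m+1$, $\#G_1=n$, and $\alpha=g-1$, where $\alpha=\max\{i:\ell_{i+1}-\ell_i=2n\}$.
   Context: A gapset is a finite set $G\subset\mathbb{N}=\{1,2,\dots\}$ such that whenever $z\in G$ and $z=x+y$ with $x,y\in\mathbb{N}$, then $x\in G$ or $y\in G$; its genus is $g=\#G$. Multiplicity $m(G)=\min\{s\in\mathbb{N}:s\notin G\}$; conductor $c(G)=\min\{s\in\mathbb{N}: s+t\notin G\ \forall t\in\mathbb{N}_0\}$; Frobenius number $F(G)=c(G)-1=\ell_g$; depth $q=\lceil c(G)/m(G)\rceil$. The canonical partition is $G=G_0\cup\dots\cup G_{q-1}$ with $G_i=G\cap[im+1,(i+1)m-1]$ (so $G_0=[1,m-1]$). $G$ is symmetric if $F(G)=2g-1$. $G$ is pure $\kappa$-sparse if $\ell_{i+1}-\ell_i\le\kappa$ for all $i$ with equality for some $i$. *)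

theory Defs
  imports Complex_Main
begin

definition gapset :: "nat set \<Rightarrow> bool" where
  "gapset G \<longleftrightarrow> finite G \<and> 0 \<notin> G \<and>
     (\<forall>z\<in>G. \<forall>x y. 0 < x \<and> 0 < y \<and> z = x + y \<longrightarrow> x \<in> G \<or> y \<in> G)"

definition genus :: "nat set \<Rightarrow> nat" where
  "genus G = card G"

text \<open>The i-th smallest element of G, 1-indexed: G = {ell G 1 < ... < ell G g}.\<close>
definition ell :: "nat set \<Rightarrow> nat \<Rightarrow> nat" where
  "ell G i = sorted_list_of_set G ! (i - 1)"

definition multiplicity :: "nat set \<Rightarrow> nat" where
  "multiplicity G = (LEAST s. 0 < s \<and> s \<notin> G)"

definition conductor :: "nat set \<Rightarrow> nat" where
  "conductor G = (LEAST s. 0 < s \<and> (\<forall>t. s + t \<notin> G))"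

definition frobenius :: "nat set \<Rightarrow> int" where
  "frobenius G = int (conductor G) - 1"

definition depth :: "nat set \<Rightarrow> int" where
  "depth G = \<lceil>real (conductor G) / real (multiplicity G)\<rceil>"

definition cpart :: "nat set \<Rightarrow> nat \<Rightarrow> nat set" where
  "cpart G i = G \<inter> {i * multiplicity G + 1 .. (i + 1) * multiplicity G - 1}"

definition symmetric_gapset :: "nat set \<Rightarrow> bool" where
  "symmetric_gapset G \<longleftrightarrow> frobenius G = 2 * int (genus G) - 1"

definition pure_sparse :: "nat \<Rightarrow> nat set \<Rightarrow> bool" where
  "pure_sparse \<kappa> G \<longleftrightarrow>
     (\<forall>i. 1 \<le> i \<and> i < genus G \<longrightarrow> ell G (i + 1) - ell G i \<le> \<kappa>) \<and>
     (\<exists>i. 1 \<le> i \<and> i < genus G \<and> ell G (i + 1) - ell G i = \<kappa>)"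

definition alpha :: "nat \<Rightarrow> nat set \<Rightarrow> nat" where
  "alpha \<kappa> G = Max {i. 1 \<le> i \<and> i < genus G \<and> ell G (i + 1) - ell G i = \<kappa>}"

end

theory Submission
  imports Defs
begin

text \<open>Let F = Max G be the Frobenius number and m the multiplicity. In every gapset,
  F - x \<in> G for each non-element x \<le> F, and x - m \<in> G for each element x > m, so consecutive
  elements differ by at most m. Symmetry, F + 1 = 2g, makes x \<mapsto> F - x a bijection from the
  non-elements of [0, F] onto G; hence F - x \<notin> G for x \<in> G, and as [1, m) \<subseteq> G no element
  lies strictly between F - m and F. So the two largest elements are F - m and F, their difference m
  is at most 2n, and pure 2n-sparsity forces m = 2n. Then F = 6n + 1 = 3m + 1, and G consists of
  [1, m - 1], G_1, 2m + 1 and 3m + 1, whence #G_1 = g - m - 1 = n.\<close>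

lemma ell_in:
  assumes "finite G" "1 \<le> i" "i \<le> card G"
  shows "ell G i \<in> G"
proof -
  have "sorted_list_of_set G ! (i - 1) \<in> set (sorted_list_of_set G)"
    using assms by (intro nth_mem) simp
  then show ?thesis using assms by (simp add: ell_def)
qed

lemma ell_strict_mono:
  assumes "finite G" "1 \<le> i" "i < j" "j \<le> card G"
  shows "ell G i < ell G j"
proof -
  have sorted: "sorted_wrt (<) (sorted_list_of_set G)" by simp
  have "sorted_list_of_set G ! (i - 1) < sorted_list_of_set G ! (j - 1)"
    using sorted_wrt_nth_less[OF sorted, of "i - 1" "j - 1"] assms by simp
  then show ?thesis by (simp add: ell_def)
qed

lemma ell_mono:
  assumes "finite G" "1 \<le> i" "i \<le> j" "j \<le> card G"
  shows "ell G i \<le> ell G j"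
  using assms ell_strict_mono[of G i j] by (cases "i = j") auto

lemma ell_surj:
  assumes "finite G" "x \<in> G"
  obtains i where "1 \<le> i" "i \<le> card G" "ell G i = x"
proof -
  from assms obtain j where "j < card G" "sorted_list_of_set G ! j = x"
    by (metis in_set_conv_nth length_sorted_list_of_set set_sorted_list_of_set)
  then show ?thesis
    using that[of "Suc j"] by (simp add: ell_def)
qed

lemma not_mem_between_consecutive_ell:
  assumes "finite G" "1 \<le> i" "i < card G" "ell G i < y" "y < ell G (i + 1)"
  shows "y \<notin> G"
proof
  assume "y \<in> G"
  then obtain j where j: "1 \<le> j" "j \<le> card G" "ell G j = y"
    using ell_surj[OF assms(1)] by blast
  show False
  proof (cases "j \<le> i")
    case True
    then show ?thesis using ell_mono[of G j i] assms j by linarith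
  next
    case False
    then show ?thesis using ell_mono[of G "i + 1" j] assms j by linarith
  qed
qed

lemma ell_card_eq_Max:
  assumes "finite G" "G \<noteq> {}"
  shows "ell G (card G) = Max G"
proof (rule antisym)
  have "0 < card G" using assms by auto
  then show "ell G (card G) \<le> Max G"
    using assms ell_in[of G "card G"] by simp
  obtain j where "1 \<le> j" "j \<le> card G" "ell G j = Max G"
    using ell_surj[OF assms(1) Max_in[OF assms]] by blast
  then show "Max G \<le> ell G (card G)"
    using assms ell_mono[of G j "card G"] by simp
qed

lemma ell_card_minus_1_eq:
  assumes "finite G" "y \<in> G" "y < Max G" "\<And>x. x \<in> G \<Longrightarrow> y < x \<Longrightarrow> x = Max G"
  shows "ell G (card G - 1) = y"
proof -
  obtain j where j: "1 \<le> j" "j \<le> card G" "ell G j = y"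
    using ell_surj[OF assms(1,2)] by blast
  have "G \<noteq> {}" using assms(2) by auto
  then have last: "ell G (card G) = Max G" using assms(1) by (simp add: ell_card_eq_Max)
  with j assms(3) have "j \<le> card G - 1" by (cases "j = card G") auto
  let ?e = "ell G (card G - 1)"
  have "y \<le> ?e"
    using j \<open>j \<le> card G - 1\<close> ell_mono[of G j "card G - 1"] assms(1) by simp
  moreover have "\<not> y < ?e"
  proof
    assume "y < ?e"
    moreover have "?e \<in> G"
      using j \<open>j \<le> card G - 1\<close> assms(1) by (intro ell_in) auto
    ultimately have "?e = Max G" using assms(4) by blast
    moreover have "?e < ell G (card G)"
      using j \<open>j \<le> card G - 1\<close> assms(1) by (intro ell_strict_mono) auto
    ultimately show False using last by simp
  qed
  ultimately show ?thesis by linarith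
qed

context
  fixes G :: "nat set"
  assumes G: "gapset G"
begin

lemma gapset_finite: "finite G"
  using G by (simp add: gapset_def)

lemma gapset_pos: "x \<in> G \<Longrightarrow> 0 < x"
  using G unfolding gapset_def by (metis gr0I)

lemma gapset_split:
  "z \<in> G \<Longrightarrow> 0 < x \<Longrightarrow> 0 < y \<Longrightarrow> z = x + y \<Longrightarrow> x \<in> G \<or> y \<in> G"
  using G unfolding gapset_def by blast

lemma multiplicity_pos: "0 < multiplicity G"
  and multiplicity_not_mem: "multiplicity G \<notin> G"
  and mem_below_multiplicity: "0 < s \<Longrightarrow> s < multiplicity G \<Longrightarrow> s \<in> G"
proof -
  have "Suc (Max G) \<notin> G"
    using Max_ge[OF gapset_finite] Suc_n_not_le_n by blast
  then have "\<exists>s. 0 < s \<and> s \<notin> G" by blast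
  from LeastI_ex[OF this] show "0 < multiplicity G" "multiplicity G \<notin> G"
    by (simp_all add: multiplicity_def)
  show "0 < s \<Longrightarrow> s < multiplicity G \<Longrightarrow> s \<in> G"
    using not_less_Least by (fastforce simp: multiplicity_def)
qed

lemma mult_multiplicity_not_mem: "0 < k \<Longrightarrow> k * multiplicity G \<notin> G"
proof (induction k rule: nat_induct_non_zero)
  case 1
  then show ?case using multiplicity_not_mem by simp
next
  case (Suc k)
  then show ?case
    using gapset_split[of "Suc k * multiplicity G" "k * multiplicity G" "multiplicity G"]
      multiplicity_not_mem multiplicity_pos by auto
qed

lemma one_less_multiplicity:
  assumes "G \<noteq> {}"
  shows "1 < multiplicity G"
proof (rule ccontr)
  assume "\<not> 1 < multiplicity G"
  then have "multiplicity G = 1" using multiplicity_pos by simp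
  then have "\<And>x. 0 < x \<Longrightarrow> x \<notin> G" using mult_multiplicity_not_mem by fastforce
  with assms gapset_pos show False by blast
qed

lemma diff_multiplicity_mem:
  assumes "x \<in> G" "multiplicity G < x"
  shows "x - multiplicity G \<in> G"
  using gapset_split[OF assms(1), of "x - multiplicity G" "multiplicity G"] assms(2)
    multiplicity_pos multiplicity_not_mem by simp

lemma ell_Suc_diff_le_multiplicity:
  assumes "1 \<le> i" "i < card G"
  shows "ell G (i + 1) - ell G i \<le> multiplicity G"
proof (rule ccontr)
  let ?m = "multiplicity G" and ?a = "ell G i" and ?b = "ell G (i + 1)"
  assume "\<not> ?b - ?a \<le> ?m"
  then have "?a < ?b - ?m" "?m < ?b" by auto
  have "?b \<in> G" using assms gapset_finite by (simp add: ell_in)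
  then have "?b - ?m \<in> G" using \<open>?m < ?b\<close> by (rule diff_multiplicity_mem)
  moreover have "?b - ?m \<notin> G"
    using \<open>?a < ?b - ?m\<close> multiplicity_pos assms gapset_finite
    by (intro not_mem_between_consecutive_ell) auto
  ultimately show False by contradiction
qed

lemma conductor_eq_Max_plus_1:
  assumes "G \<noteq> {}"
  shows "conductor G = Max G + 1"
  unfolding conductor_def
proof (rule Least_equality)
  show "0 < Max G + 1 \<and> (\<forall>t. Max G + 1 + t \<notin> G)"
    using Max_ge[OF gapset_finite] by fastforce
  fix s assume s: "0 < s \<and> (\<forall>t. s + t \<notin> G)"
  show "Max G + 1 \<le> s"
  proof (rule ccontr)
    assume "\<not> Max G + 1 \<le> s"
    then have "s + (Max G - s) = Max G" by simp
    with s Max_in[OF gapset_finite assms] show False by metis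
  qed
qed

lemma Max_diff_mem_if_not_mem:
  assumes "G \<noteq> {}" "x \<le> Max G" "x \<notin> G"
  shows "Max G - x \<in> G"
proof -
  have F: "Max G \<in> G" using Max_in[OF gapset_finite assms(1)] .
  show ?thesis
  proof (cases "x = 0")
    case False
    with F assms(2,3) have "0 < x" "x < Max G" by (auto simp: order_le_less)
    then show ?thesis using gapset_split[OF F, of x "Max G - x"] assms(3) by simp
  qed (use F in simp)
qed

end

lemma symmetric_gapset_iff:
  assumes "gapset G" "G \<noteq> {}"
  shows "symmetric_gapset G \<longleftrightarrow> Max G + 1 = 2 * card G"
  using conductor_eq_Max_plus_1[OF assms]
  by (simp add: symmetric_gapset_def frobenius_def genus_def) linarith

lemma symmetric_gapset_nonempty: "symmetric_gapset G \<Longrightarrow> G \<noteq> {}"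
proof
  have "conductor {} = 1"
    unfolding conductor_def by (rule Least_equality) auto
  moreover assume "symmetric_gapset G" "G = {}"
  ultimately show False by (simp add: symmetric_gapset_def frobenius_def genus_def)
qed

context
  fixes G :: "nat set"
  assumes G: "gapset G" and sym: "symmetric_gapset G"
begin

private lemma nonempty: "G \<noteq> {}"
  using sym by (rule symmetric_gapset_nonempty)

lemma symmetric_gapset_Max_diff_not_mem:
  assumes "x \<in> G"
  shows "Max G - x \<notin> G"
proof -
  let ?F = "Max G" and ?C = "{0..Max G} - G"
  have fin: "finite G" using G by (rule gapset_finite)
  have "G \<subseteq> {0..?F}" using fin by auto
  then have "card ?C = card G"
    using symmetric_gapset_iff[OF G nonempty] sym fin by (simp add: card_Diff_subset)
  moreover have "inj_on (\<lambda>y. ?F - y) ?C" by (auto simp: inj_on_def)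
  moreover have "(\<lambda>y. ?F - y) ` ?C \<subseteq> G"
    using Max_diff_mem_if_not_mem[OF G nonempty] by auto
  ultimately have "(\<lambda>y. ?F - y) ` ?C = G"
    using fin by (metis card_image card_subset_eq)
  with assms obtain y where y: "y \<in> ?C" "x = ?F - y" by blast
  from y(1) have "y \<le> ?F" "y \<notin> G" by auto
  with y(2) show ?thesis by simp
qed

lemma symmetric_gapset_mem_above_Max_diff_multiplicity:
  assumes "x \<in> G" "Max G - multiplicity G < x"
  shows "x = Max G"
proof (rule ccontr)
  assume "x \<noteq> Max G"
  moreover have "x \<le> Max G" using assms(1) Max_ge[OF gapset_finite[OF G]] by simp
  ultimately have "0 < Max G - x" "Max G - x < multiplicity G"
    using assms(2) by linarith+
  then show False
    using mem_below_multiplicity[OF G] symmetric_gapset_Max_diff_not_mem assms(1) by blast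
qed

lemma symmetric_gapset_multiplicity_less_Max:
  assumes "2 \<le> card G"
  shows "multiplicity G < Max G"
proof (rule ccontr)
  assume "\<not> ?thesis"
  moreover have "multiplicity G \<noteq> Max G"
    using Max_in[OF gapset_finite[OF G] nonempty] multiplicity_not_mem[OF G] by metis
  ultimately have "{1..Max G} \<subseteq> G" using mem_below_multiplicity[OF G] by auto
  then have "card {1..Max G} \<le> card G" by (rule card_mono[OF gapset_finite[OF G]])
  then show False
    using symmetric_gapset_iff[OF G nonempty] sym assms by simp
qed

lemma symmetric_gapset_ell_card_minus_1:
  assumes "2 \<le> card G"
  shows "ell G (card G - 1) = Max G - multiplicity G"
proof (rule ell_card_minus_1_eq)
  show "finite G" using G by (rule gapset_finite)
  show "Max G - multiplicity G \<in> G"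
    using symmetric_gapset_multiplicity_less_Max[OF assms] multiplicity_not_mem[OF G]
    by (intro Max_diff_mem_if_not_mem[OF G nonempty]) auto
  show "Max G - multiplicity G < Max G"
    using symmetric_gapset_multiplicity_less_Max[OF assms] multiplicity_pos[OF G] by simp
qed (rule symmetric_gapset_mem_above_Max_diff_multiplicity)

lemma symmetric_pure_sparse_multiplicity:
  assumes "2 \<le> card G" "pure_sparse \<kappa> G"
  shows "multiplicity G = \<kappa>"
proof (rule antisym)
  have sparse: "\<And>i. 1 \<le> i \<Longrightarrow> i < card G \<Longrightarrow> ell G (i + 1) - ell G i \<le> \<kappa>"
    using assms(2) unfolding pure_sparse_def genus_def by blast
  have "ell G (card G - 1 + 1) - ell G (card G - 1) \<le> \<kappa>"
    using assms(1) by (intro sparse) auto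
  then show "multiplicity G \<le> \<kappa>"
    using symmetric_gapset_ell_card_minus_1[OF assms(1)]
      ell_card_eq_Max[OF gapset_finite[OF G] nonempty]
      symmetric_gapset_multiplicity_less_Max[OF assms(1)] assms(1) by simp
  obtain i where "1 \<le> i" "i < card G" "ell G (i + 1) - ell G i = \<kappa>"
    using assms(2) unfolding pure_sparse_def genus_def by blast
  then show "\<kappa> \<le> multiplicity G"
    using ell_Suc_diff_le_multiplicity[OF G] by metis
qed

end

lemma alpha_eq_card_minus_1:
  assumes "2 \<le> card G" "ell G (card G) - ell G (card G - 1) = \<kappa>"
  shows "alpha \<kappa> G = card G - 1"
  unfolding alpha_def genus_def
proof (rule Max_eqI)
  show "card G - 1 \<in> {i. 1 \<le> i \<and> i < card G \<and> ell G (i + 1) - ell G i = \<kappa>}"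
    using assms by simp
qed auto

lemma cpart_0_eq:
  assumes "gapset G"
  shows "cpart G 0 = {1..multiplicity G - 1}"
  using mem_below_multiplicity[OF assms] by (auto simp: cpart_def)

context
  fixes G :: "nat set"
  assumes G: "gapset G" and sym: "symmetric_gapset G"
    and Frobenius: "Max G = 3 * multiplicity G + 1"
begin

private abbreviation (input) m where "m \<equiv> multiplicity G"

private lemma two_le_multiplicity: "2 \<le> m"
  using one_less_multiplicity[OF G symmetric_gapset_nonempty[OF sym]] by simp

private lemma mem_le_Max: "x \<in> G \<Longrightarrow> x \<le> 3 * m + 1"
  using Max_ge[OF gapset_finite[OF G]] Frobenius by metis

private lemma mem_above_2m_plus_1: "x \<in> G \<Longrightarrow> 2 * m + 1 < x \<Longrightarrow> x = 3 * m + 1"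
  using symmetric_gapset_mem_above_Max_diff_multiplicity[OF G sym] Frobenius by simp

private lemma two_m_plus_1_mem: "2 * m + 1 \<in> G"
  using Max_diff_mem_if_not_mem[OF G symmetric_gapset_nonempty[OF sym], of m]
    multiplicity_not_mem[OF G] Frobenius by simp

lemma depth_Frobenius_3m_plus_1: "depth G = 4"
proof -
  have "real m \<ge> 2" using two_le_multiplicity by simp
  moreover have "conductor G = 3 * m + 2"
    using conductor_eq_Max_plus_1[OF G symmetric_gapset_nonempty[OF sym]] Frobenius by simp
  ultimately show ?thesis
    unfolding depth_def by (intro ceiling_unique) (simp_all add: field_simps)
qed

lemma cpart_3_Frobenius_3m_plus_1: "cpart G 3 = {Max G}"
  using mem_le_Max Max_in[OF gapset_finite[OF G] symmetric_gapset_nonempty[OF sym]]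
    two_le_multiplicity Frobenius
  by (fastforce simp: cpart_def)

lemma cpart_2_Frobenius_3m_plus_1: "cpart G 2 = {2 * m + 1}"
  using mem_above_2m_plus_1 two_m_plus_1_mem two_le_multiplicity
  by (fastforce simp: cpart_def)

lemma cpart_union_Frobenius_3m_plus_1:
  "G = cpart G 0 \<union> cpart G 1 \<union> cpart G 2 \<union> cpart G 3"
proof (rule equalityI)
  show "G \<subseteq> cpart G 0 \<union> cpart G 1 \<union> cpart G 2 \<union> cpart G 3"
  proof
    fix x assume x: "x \<in> G"
    have "0 < x" "x \<le> 3 * m + 1" using x gapset_pos[OF G] mem_le_Max by auto
    moreover have "x = 3 * m + 1 \<or> x \<le> 2 * m + 1" using x mem_above_2m_plus_1 by force
    moreover have "x \<noteq> m" "x \<noteq> 2 * m"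
      using x multiplicity_not_mem[OF G] mult_multiplicity_not_mem[OF G, of 2] by auto
    ultimately show "x \<in> cpart G 0 \<union> cpart G 1 \<union> cpart G 2 \<union> cpart G 3"
      using x two_le_multiplicity unfolding cpart_def by auto
  qed
qed (auto simp: cpart_def)

lemma card_Frobenius_3m_plus_1: "card G = card (cpart G 1) + m + 1"
proof -
  let ?G1 = "cpart G 1" and ?low = "{1..m - 1} \<union> cpart G 1" and ?top = "{2 * m + 1, 3 * m + 1}"
  have G_eq: "G = ?low \<union> ?top"
    using cpart_union_Frobenius_3m_plus_1 cpart_0_eq[OF G] cpart_2_Frobenius_3m_plus_1
      cpart_3_Frobenius_3m_plus_1 Frobenius by auto
  have fin: "finite ?G1" using gapset_finite[OF G] by (simp add: cpart_def)
  have sub: "?G1 \<subseteq> {m + 1..2 * m - 1}" by (auto simp: cpart_def)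
  have "card G = card (?low \<union> ?top)" using G_eq by (rule arg_cong)
  also have "\<dots> = card ?low + card ?top"
    using fin sub by (intro card_Un_disjoint) auto
  also have "card ?low = (m - 1) + card ?G1"
    using fin sub by (subst card_Un_disjoint) fastforce+
  finally show ?thesis using two_le_multiplicity by simp
qed

end

theorem mainTheorem9:
  fixes n :: nat and G :: "nat set"
  assumes "0 < n"
    and "gapset G"
    and "genus G = 3 * n + 1"
    and "symmetric_gapset G"
    and "pure_sparse (2 * n) G"
  shows "depth G = 4
    \<and> G = cpart G 0 \<union> cpart G 1 \<union> cpart G 2 \<union> cpart G 3
    \<and> cpart G 3 = {ell G (genus G)}
    \<and> cpart G 2 = {ell G (genus G - 1)}
    \<and> ell G (genus G - 1) = 2 * multiplicity G + 1
    \<and> ell G (genus G) = 3 * multiplicity G + 1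
    \<and> card (cpart G 1) = n
    \<and> alpha (2 * n) G = genus G - 1"
proof -
  have card: "card G = 3 * n + 1" "2 \<le> card G" using assms(1,3) by (simp_all add: genus_def)
  have nonempty: "G \<noteq> {}" using assms(4) by (rule symmetric_gapset_nonempty)
  have m: "multiplicity G = 2 * n"
    using symmetric_pure_sparse_multiplicity[OF assms(2,4) card(2) assms(5)] .
  have Frobenius: "Max G = 3 * multiplicity G + 1"
    using symmetric_gapset_iff[OF assms(2) nonempty] assms(4) card(1) m by simp
  have last: "ell G (genus G) = Max G"
    using ell_card_eq_Max[OF gapset_finite[OF assms(2)] nonempty] by (simp add: genus_def)
  have penultimate: "ell G (genus G - 1) = 2 * multiplicity G + 1"
    using symmetric_gapset_ell_card_minus_1[OF assms(2,4) card(2)] Frobenius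
    by (simp add: genus_def)
  have "alpha (2 * n) G = genus G - 1"
    using alpha_eq_card_minus_1[OF card(2)] last penultimate Frobenius m by (simp add: genus_def)
  then show ?thesis
    using Frobenius last penultimate m card(1)
      depth_Frobenius_3m_plus_1[OF assms(2,4) Frobenius]
      cpart_3_Frobenius_3m_plus_1[OF assms(2,4) Frobenius]
      cpart_2_Frobenius_3m_plus_1[OF assms(2,4) Frobenius]
      card_Frobenius_3m_plus_1[OF assms(2,4) Frobenius]
    by (intro conjI cpart_union_Frobenius_3m_plus_1[OF assms(2,4) Frobenius]) simp_all
qed

end
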